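(* Let $P$ be a finite poset and let $\varphi:P\to P$ satisfy $\varphi\circ\varphi=\mathrm{id}_P$ and $x\le y\iff\varphi(x)\le\varphi(y)$ for all $x,y\in P$. Let $F:=\{x\in P:\varphi(x)=x\}$, regarded as an induced subposet of $P$. If $F$ is a down set of $P$ (i.e., $x\in F$ and $y\le x$ imply $y\in F$), then the parallel union $P+F'$, where $F'$ is a disjoint copy of $F$, is a $\forall$-game; equivalently, $P$ and $F$ are equivalent games, and $g(P)=g(F)$.
   Context: A finite poset $P$ defines a poset game: two players alternate moves; a move consists of choosing a point $x$ of the current poset $Q$ and replacing $Q$ by $Q_x:=\{y\in Q: x\not\le y\}$; the first player unable to move loses. $P$ is an $\exists$-game if the first player has a winning strategy and a $\forall$-game otherwise. The parallel union $P+Q$ of posets is their disjoint union with points of $P$ incomparable to points of $Q$. For finite posets, $P$ and $Q$ are equivalent iff $P+Q$ is a $\forall$-game. The g-number (Grundy number) is defined recursively by $g(P):=\operatorname{mex}\{g(P_x):x\in P\}$, where $\operatorname{mex}A$ is the least natural number not in $A$ (so $g(\emptyset)=0$). *)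

theory Defs
  imports Main
begin

definition poset_on :: "'a set \<Rightarrow> ('a \<Rightarrow> 'a \<Rightarrow> bool) \<Rightarrow> bool" where
  "poset_on P le \<longleftrightarrow>
     (\<forall>x\<in>P. le x x) \<and>
     (\<forall>x\<in>P. \<forall>y\<in>P. le x y \<and> le y x \<longrightarrow> x = y) \<and>
     (\<forall>x\<in>P. \<forall>y\<in>P. \<forall>z\<in>P. le x y \<and> le y z \<longrightarrow> le x z)"

definition move :: "('a \<Rightarrow> 'a \<Rightarrow> bool) \<Rightarrow> 'a set \<Rightarrow> 'a \<Rightarrow> 'a set" where
  "move le Q x = {y\<in>Q. \<not> le x y}"

definition mex :: "nat set \<Rightarrow> nat" where
  "mex A = (LEAST n. n \<notin> A)"

lemma move_psubset:
  assumes "finite Q" "x \<in> Q" "le x x"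
  shows "card (move le Q x) < card Q"
  using assms unfolding move_def by (intro psubset_card_mono) auto

text \<open>Existence of a winning strategy for the first player (an exists-game).
The guard (finiteness, reflexivity) only ensures termination; it holds for finite posets.\<close>
function win :: "('a \<Rightarrow> 'a \<Rightarrow> bool) \<Rightarrow> 'a set \<Rightarrow> bool" where
  "win le Q = (if finite Q \<and> (\<forall>x\<in>Q. le x x)
               then (\<exists>x\<in>Q. \<not> win le (move le Q x)) else False)"
  by auto
termination
  by (relation "measure (\<lambda>(le, Q). card Q)") (auto intro: move_psubset)

definition forall_game :: "('a \<Rightarrow> 'a \<Rightarrow> bool) \<Rightarrow> 'a set \<Rightarrow> bool" where
  "forall_game le Q \<longleftrightarrow> \<not> win le Q"

function grundy :: "('a \<Rightarrow> 'a \<Rightarrow> bool) \<Rightarrow> 'a set \<Rightarrow> nat" where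
  "grundy le Q = (if finite Q \<and> (\<forall>x\<in>Q. le x x)
               then mex ((\<lambda>x. grundy le (move le Q x)) ` Q) else 0)"
  by auto
termination
  by (relation "measure (\<lambda>(le, Q). card Q)") (auto intro: move_psubset)

fun sum_le :: "('a \<Rightarrow> 'a \<Rightarrow> bool) \<Rightarrow> ('b \<Rightarrow> 'b \<Rightarrow> bool) \<Rightarrow> 'a + 'b \<Rightarrow> 'a + 'b \<Rightarrow> bool" where
  "sum_le le1 le2 (Inl a) (Inl b) = le1 a b"
| "sum_le le1 le2 (Inr a) (Inr b) = le2 a b"
| "sum_le le1 le2 _ _ = False"

definition par_union :: "'a set \<Rightarrow> 'b set \<Rightarrow> ('a + 'b) set" where
  "par_union P Q = Inl ` P \<union> Inr ` Q"

end

theory Submission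
  imports Defs
begin

text \<open>The second player mirrors: a move at a non-fixed point x of a \<phi>-stable position Q is
answered by \<phi> x in the same component, which restores \<phi>-stability and leaves Q \<inter> F untouched,
because no fixed point lies above x or \<phi> x (F is a down set). A move at a fixed point x in one
component is answered by x in the other; \<phi>-stability survives since x \<le> \<phi> y iff x \<le> y.
By induction, Q + (Q \<inter> F) is a \<forall>-game for every \<phi>-stable Q, and the same pairing of moves
shows g(Q) = g(Q \<inter> F): non-fixed moves lead to positions of Grundy value different from
g(Q \<inter> F), so they do not affect the mex.\<close>

declare win.simps[simp del] grundy.simps[simp del]

lemma mex_notin: "finite A \<Longrightarrow> mex A \<notin> A"
  unfolding mex_def by (rule LeastI_ex) (meson ex_new_if_finite infinite_UNIV_nat)

lemma less_mex_in: "k < mex A \<Longrightarrow> k \<in> A"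
  unfolding mex_def using not_less_Least by blast

lemma mex_eqI: "m \<notin> A \<Longrightarrow> (\<And>k. k < m \<Longrightarrow> k \<in> A) \<Longrightarrow> mex A = m"
  unfolding mex_def by (rule Least_equality) (auto simp: not_less[symmetric])

lemma mex_Un_eq: "finite A \<Longrightarrow> mex A \<notin> B \<Longrightarrow> mex (A \<union> B) = mex A"
  by (rule mex_eqI) (auto dest: mex_notin less_mex_in)

lemma move_subset: "move le Q x \<subseteq> Q"
  unfolding move_def by auto

lemma win_iff:
  assumes "finite T" "\<forall>x\<in>T. le x x"
  shows "win le T \<longleftrightarrow> (\<exists>z\<in>T. \<not> win le (move le T z))"
  using assms by (subst win.simps) simp

lemma grundy_eq:
  assumes "finite T" "\<forall>x\<in>T. le x x"
  shows "grundy le T = mex ((\<lambda>x. grundy le (move le T x)) ` T)"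
  using assms by (subst grundy.simps) simp

lemma not_win_if_replies:
  assumes "finite T" "\<forall>x\<in>T. le x x"
    and "\<And>z. z \<in> T \<Longrightarrow> \<exists>z'\<in>move le T z. \<not> win le (move le (move le T z) z')"
  shows "\<not> win le T"
proof -
  have "win le (move le T z)" if "z \<in> T" for z
  proof -
    have "finite (move le T z)"
      by (rule finite_subset[OF move_subset assms(1)])
    moreover have "\<forall>x\<in>move le T z. le x x"
      using assms(2) by (simp add: move_def)
    ultimately show ?thesis using assms(3)[OF that] by (simp add: win_iff)
  qed
  then show ?thesis by (simp add: win_iff[of T le, OF assms(1,2)])
qed

lemma grundy_move_neq:
  assumes "finite T" "\<forall>x\<in>T. le x x" "z \<in> T"
  shows "grundy le (move le T z) \<noteq> grundy le T"
proof -
  have "grundy le (move le T z) \<in> (\<lambda>x. grundy le (move le T x)) ` T" using assms(3) by blast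
  then show ?thesis using grundy_eq[of T le, OF assms(1,2)] mex_notin assms(1) by (metis finite_imageI)
qed

lemma move_par_union_Inl:
  "move (sum_le le1 le2) (par_union Q R) (Inl x) = par_union (move le1 Q x) R"
  unfolding move_def par_union_def by auto

lemma move_par_union_Inr:
  "move (sum_le le1 le2) (par_union Q R) (Inr x) = par_union Q (move le2 R x)"
  unfolding move_def par_union_def by auto

lemma finite_par_union: "finite Q \<Longrightarrow> finite R \<Longrightarrow> finite (par_union Q R)"
  unfolding par_union_def by blast

lemma sum_le_refl_on_par_union:
  "\<forall>x\<in>Q. le1 x x \<Longrightarrow> \<forall>y\<in>R. le2 y y \<Longrightarrow> \<forall>z\<in>par_union Q R. sum_le le1 le2 z z"
  unfolding par_union_def by auto

locale poset_involution =
  fixes P :: "'a set" and le :: "'a \<Rightarrow> 'a \<Rightarrow> bool" and \<phi> :: "'a \<Rightarrow> 'a" and F :: "'a set"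
  assumes finite_P: "finite P" and poset: "poset_on P le"
    and \<phi>_closed: "\<forall>x\<in>P. \<phi> x \<in> P"
    and \<phi>_involution: "\<forall>x\<in>P. \<phi> (\<phi> x) = x"
    and \<phi>_order_iso: "\<forall>x\<in>P. \<forall>y\<in>P. le x y \<longleftrightarrow> le (\<phi> x) (\<phi> y)"
    and F_def: "F = {x\<in>P. \<phi> x = x}"
    and F_down_closed: "\<forall>x\<in>F. \<forall>y\<in>P. le y x \<longrightarrow> y \<in> F"
begin

definition \<phi>_stable :: "'a set \<Rightarrow> bool" where
  "\<phi>_stable Q \<longleftrightarrow> Q \<subseteq> P \<and> (\<forall>x\<in>Q. \<phi> x \<in> Q)"

definition mirror_reply :: "'a set \<Rightarrow> 'a \<Rightarrow> 'a set" where
  "mirror_reply Q x = move le (move le Q x) (\<phi> x)"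

lemma poset_refl: "x \<in> P \<Longrightarrow> le x x"
  using poset unfolding poset_on_def by blast

lemma poset_antisym: "x \<in> P \<Longrightarrow> y \<in> P \<Longrightarrow> le x y \<Longrightarrow> le y x \<Longrightarrow> x = y"
  using poset unfolding poset_on_def by blast

lemma fixed_le_\<phi>_iff: "x \<in> F \<Longrightarrow> y \<in> P \<Longrightarrow> le x (\<phi> y) \<longleftrightarrow> le x y"
  using \<phi>_order_iso \<phi>_closed \<phi>_involution unfolding F_def by (metis (mono_tags, lifting) mem_Collect_eq)

lemma not_le_\<phi>_self:
  assumes "x \<in> P - F"
  shows "\<not> le x (\<phi> x)"
proof
  assume le_x: "le x (\<phi> x)"
  have x: "x \<in> P" "\<phi> x \<in> P" "\<phi> x \<noteq> x"
    using assms \<phi>_closed unfolding F_def by auto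
  have "le (\<phi> x) (\<phi> (\<phi> x))"
    using le_x x \<phi>_order_iso by blast
  then have "le (\<phi> x) x"
    using x \<phi>_involution by simp
  then show False
    using poset_antisym[OF x(1,2) le_x] x(3) by simp
qed

lemma not_le_fixed: "x \<in> P - F \<Longrightarrow> y \<in> F \<Longrightarrow> \<not> le x y"
  using F_down_closed by blast

lemma \<phi>_not_fixed: "x \<in> P - F \<Longrightarrow> \<phi> x \<in> P - F"
  using \<phi>_closed \<phi>_involution unfolding F_def by force

lemma \<phi>_stable_finite: "\<phi>_stable Q \<Longrightarrow> finite Q"
  unfolding \<phi>_stable_def by (metis finite_P finite_subset)

lemma \<phi>_stable_refl: "\<phi>_stable Q \<Longrightarrow> \<forall>x\<in>Q. le x x"
  unfolding \<phi>_stable_def using poset_refl by auto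

lemma card_move_less: "\<phi>_stable Q \<Longrightarrow> x \<in> Q \<Longrightarrow> card (move le Q x) < card Q"
  by (rule move_psubset) (auto simp: \<phi>_stable_finite \<phi>_stable_refl)

lemma move_Int_F: "move le (Q \<inter> F) x = move le Q x \<inter> F"
  unfolding move_def by auto

lemma \<phi>_stable_move_fixed:
  assumes "\<phi>_stable Q" "x \<in> Q \<inter> F"
  shows "\<phi>_stable (move le Q x)"
  using assms fixed_le_\<phi>_iff unfolding \<phi>_stable_def move_def by auto

lemma \<phi>_in_move:
  assumes "\<phi>_stable Q" "x \<in> Q - F"
  shows "\<phi> x \<in> move le Q x"
  using assms not_le_\<phi>_self unfolding \<phi>_stable_def move_def by auto

lemma \<phi>_stable_mirror_reply:
  assumes "\<phi>_stable Q" "x \<in> Q - F"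
  shows "\<phi>_stable (mirror_reply Q x)"
proof -
  have xP: "x \<in> P" using assms unfolding \<phi>_stable_def by auto
  have "\<phi> y \<in> mirror_reply Q x" if "y \<in> mirror_reply Q x" for y
  proof -
    have y: "y \<in> Q" "\<not> le x y" "\<not> le (\<phi> x) y" "y \<in> P"
      using that assms(1) unfolding mirror_reply_def move_def \<phi>_stable_def by auto
    have "\<not> le x (\<phi> y)" using y \<phi>_order_iso \<phi>_closed \<phi>_involution xP by metis
    moreover have "\<not> le (\<phi> x) (\<phi> y)" using y \<phi>_order_iso xP by blast
    ultimately show ?thesis
      using y assms(1) unfolding mirror_reply_def move_def \<phi>_stable_def by auto
  qed
  then show ?thesis
    using assms(1) unfolding \<phi>_stable_def mirror_reply_def move_def by auto
qed

lemma mirror_reply_Int_F: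
  assumes "\<phi>_stable Q" "x \<in> Q - F"
  shows "mirror_reply Q x \<inter> F = Q \<inter> F"
proof -
  have "x \<in> P - F" "\<phi> x \<in> P - F"
    using assms \<phi>_not_fixed unfolding \<phi>_stable_def by auto
  then show ?thesis
    using not_le_fixed unfolding mirror_reply_def move_def by auto
qed

lemma card_mirror_reply_less:
  assumes "\<phi>_stable Q" "x \<in> Q - F"
  shows "card (mirror_reply Q x) < card Q"
proof -
  have "card (mirror_reply Q x) \<le> card (move le Q x)"
    unfolding mirror_reply_def
    by (rule card_mono[OF finite_subset[OF move_subset] move_subset]) (rule \<phi>_stable_finite[OF assms(1)])
  also have "\<dots> < card Q"
    using card_move_less assms by blast
  finally show ?thesis .
qed

lemma grundy_\<phi>_stable: "\<phi>_stable Q \<Longrightarrow> grundy le Q = grundy le (Q \<inter> F)"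
proof (induction "card Q" arbitrary: Q rule: less_induct)
  case less
  have fin_Q: "finite Q" and refl_Q: "\<forall>x\<in>Q. le x x"
    using less.prems \<phi>_stable_finite \<phi>_stable_refl by auto
  let ?g = "\<lambda>x. grundy le (move le Q x)"
  have fixed_moves: "?g ` (Q \<inter> F) = (\<lambda>x. grundy le (move le (Q \<inter> F) x)) ` (Q \<inter> F)"
  proof (rule image_cong[OF refl])
    fix x assume "x \<in> Q \<inter> F"
    then show "?g x = grundy le (move le (Q \<inter> F) x)"
      using less.hyps[OF card_move_less \<phi>_stable_move_fixed] less.prems move_Int_F by auto
  qed
  have grundy_QF: "grundy le (Q \<inter> F) = mex (?g ` (Q \<inter> F))"
    using grundy_eq[of "Q \<inter> F" le] fin_Q refl_Q fixed_moves by auto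
  have "grundy le (Q \<inter> F) \<notin> ?g ` (Q - F)"
  proof
    assume "grundy le (Q \<inter> F) \<in> ?g ` (Q - F)"
    then obtain x where x: "x \<in> Q - F" and eq: "grundy le (Q \<inter> F) = ?g x" by blast
    have "grundy le (mirror_reply Q x) = grundy le (Q \<inter> F)"
      using less.hyps[OF card_mirror_reply_less \<phi>_stable_mirror_reply] mirror_reply_Int_F
        less.prems x by metis
    moreover have "grundy le (mirror_reply Q x) \<noteq> ?g x"
      unfolding mirror_reply_def
    proof (rule grundy_move_neq)
      show "finite (move le Q x)" by (rule finite_subset[OF move_subset fin_Q])
      show "\<forall>y\<in>move le Q x. le y y" using refl_Q by (simp add: move_def)
      show "\<phi> x \<in> move le Q x" using \<phi>_in_move[OF less.prems x] .
    qed
    ultimately show False using eq by simp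
  qed
  have "grundy le Q = mex (?g ` (Q \<inter> F) \<union> ?g ` (Q - F))"
    using grundy_eq[of Q le, OF fin_Q refl_Q] by (simp add: Int_Diff_Un image_Un[symmetric])
  also have "\<dots> = mex (?g ` (Q \<inter> F))"
    using mex_Un_eq fin_Q \<open>grundy le (Q \<inter> F) \<notin> ?g ` (Q - F)\<close> grundy_QF by simp
  finally show ?case using grundy_QF by simp
qed

lemma forall_game_\<phi>_stable:
  "\<phi>_stable Q \<Longrightarrow> \<not> win (sum_le le le) (par_union Q (Q \<inter> F))"
proof (induction "card Q" arbitrary: Q rule: less_induct)
  case less
  have fin_Q: "finite Q" and refl_Q: "\<forall>x\<in>Q. le x x"
    using less.prems \<phi>_stable_finite \<phi>_stable_refl by auto
  let ?T = "par_union Q (Q \<inter> F)" and ?lost = "\<lambda>T. \<not> win (sum_le le le) T"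
  show ?case
  proof (rule not_win_if_replies)
    show "finite ?T" using fin_Q by (simp add: finite_par_union)
    show "\<forall>z\<in>?T. sum_le le le z z" using refl_Q by (intro sum_le_refl_on_par_union) auto
  next
    fix z assume "z \<in> ?T"
    then consider (fixed_left) x where "x \<in> Q \<inter> F" "z = Inl x"
      | (fixed_right) x where "x \<in> Q \<inter> F" "z = Inr x"
      | (nonfixed) x where "x \<in> Q - F" "z = Inl x"
      unfolding par_union_def by blast
    then show "\<exists>z'\<in>move (sum_le le le) ?T z. ?lost (move (sum_le le le) (move (sum_le le le) ?T z) z')"
    proof cases
      case (fixed_left x)
      have "Inr x \<in> move (sum_le le le) ?T z"
        using fixed_left by (auto simp: move_def par_union_def)
      moreover have "?lost (par_union (move le Q x) (move le Q x \<inter> F))"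
        using less.hyps[OF card_move_less \<phi>_stable_move_fixed] less.prems fixed_left by blast
      then have "?lost (move (sum_le le le) (move (sum_le le le) ?T z) (Inr x))"
        using fixed_left by (simp add: move_par_union_Inl move_par_union_Inr move_Int_F)
      ultimately show ?thesis by blast
    next
      case (fixed_right x)
      have "Inl x \<in> move (sum_le le le) ?T z"
        using fixed_right by (auto simp: move_def par_union_def)
      moreover have "?lost (par_union (move le Q x) (move le Q x \<inter> F))"
        using less.hyps[OF card_move_less \<phi>_stable_move_fixed] less.prems fixed_right by blast
      then have "?lost (move (sum_le le le) (move (sum_le le le) ?T z) (Inl x))"
        using fixed_right by (simp add: move_par_union_Inl move_par_union_Inr move_Int_F)
      ultimately show ?thesis by blast
    next
      case (nonfixed x)
      have "Inl (\<phi> x) \<in> move (sum_le le le) ?T z"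
        using nonfixed \<phi>_in_move[OF less.prems nonfixed(1)]
        by (simp add: move_par_union_Inl) (simp add: par_union_def)
      moreover have "?lost (par_union (mirror_reply Q x) (Q \<inter> F))"
        using less.hyps[OF card_mirror_reply_less \<phi>_stable_mirror_reply] mirror_reply_Int_F
          less.prems nonfixed by metis
      then have "?lost (move (sum_le le le) (move (sum_le le le) ?T z) (Inl (\<phi> x)))"
        using nonfixed by (simp add: move_par_union_Inl mirror_reply_def)
      ultimately show ?thesis by blast
    qed
  qed
qed

end

theorem mainTheorem3:
  fixes P :: "'a set" and le :: "'a \<Rightarrow> 'a \<Rightarrow> bool" and \<phi> :: "'a \<Rightarrow> 'a"
  assumes "finite P" and "poset_on P le"
    and "\<forall>x\<in>P. \<phi> x \<in> P"
    and "\<forall>x\<in>P. \<phi> (\<phi> x) = x"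
    and "\<forall>x\<in>P. \<forall>y\<in>P. le x y \<longleftrightarrow> le (\<phi> x) (\<phi> y)"
    and "F = {x\<in>P. \<phi> x = x}"
    and "\<forall>x\<in>F. \<forall>y\<in>P. le y x \<longrightarrow> y \<in> F"
  shows "forall_game (sum_le le le) (par_union P F) \<and> grundy le P = grundy le F"
proof -
  interpret poset_involution P le \<phi> F
    using assms by unfold_locales
  have "\<phi>_stable P" and "P \<inter> F = F"
    unfolding \<phi>_stable_def using assms(3,6) by auto
  then show ?thesis
    using forall_game_\<phi>_stable grundy_\<phi>_stable unfolding forall_game_def by metis
qed

end
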